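(* Let $I$ be a nonzero ideal of $\mathbb{Z}[\zeta_8]$. Then there exists a generator $\alpha'$ of $I$ (i.e. $I=(\alpha')$) which is a shortest nonzero vector of $I$ under the canonical embedding, i.e. $\|\Sigma_{\mathbb{Q}(\zeta_8)}(\alpha')\|\le\|\Sigma_{\mathbb{Q}(\zeta_8)}(\gamma)\|$ for every nonzero $\gamma\in I$.
   Context: $\zeta_8=e^{2\pi i/8}$. For a number field $\mathbb{K}$ with complex embeddings $\varphi_1,\dots,\varphi_t$ (all of them), the canonical embedding is $\Sigma_{\mathbb{K}}(x)=(\varphi_1(x),\dots,\varphi_t(x))$ with $\|\Sigma_{\mathbb{K}}(x)\|^2=\sum_j|\varphi_j(x)|^2$. *)

theory Defs
  imports Complex_Main
begin

definition zeta8 :: complex where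
  "zeta8 = cis (2 * pi / 8)"

definition Z8 :: "complex set" where
  "Z8 = {of_int a + of_int b * zeta8 + of_int c * zeta8 ^ 2 + of_int d * zeta8 ^ 3
         | a b c d :: int. True}"

text \<open>The complex embeddings of Q(zeta_8) restricted to Z[zeta_8]: phi_k sends zeta_8 to
  zeta_8^k, for k in {1,3,5,7}. (Well defined since 1, zeta_8, zeta_8^2, zeta_8^3 is a
  Z-basis of Z[zeta_8].)\<close>
definition emb :: "nat \<Rightarrow> complex \<Rightarrow> complex" where
  "emb k x = (THE y. \<exists>a b c d :: int.
      x = of_int a + of_int b * zeta8 + of_int c * zeta8 ^ 2 + of_int d * zeta8 ^ 3 \<and>
      y = of_int a + of_int b * zeta8 ^ k + of_int c * zeta8 ^ (2 * k) + of_int d * zeta8 ^ (3 * k))"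

definition canon_norm :: "complex \<Rightarrow> real" where
  "canon_norm x = sqrt (\<Sum>k\<in>{1,3,5,7::nat}. (cmod (emb k x))\<^sup>2)"

definition is_ideal_Z8 :: "complex set \<Rightarrow> bool" where
  "is_ideal_Z8 I \<longleftrightarrow> I \<subseteq> Z8 \<and> 0 \<in> I \<and> (\<forall>x\<in>I. \<forall>y\<in>I. x + y \<in> I)
      \<and> (\<forall>r\<in>Z8. \<forall>x\<in>I. r * x \<in> I)"

definition principal_Z8 :: "complex \<Rightarrow> complex set" where
  "principal_Z8 \<alpha> = {r * \<alpha> | r. r \<in> Z8}"

end

theory Submission
  imports Defs
begin

text \<open>
  \<open>\<int>[\<zeta>\<^sub>8]\<close> is norm-Euclidean: the field norm is \<open>N(x) = |x|\<^sup>2 |\<sigma> x|\<^sup>2\<close> with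
  \<open>\<sigma> = \<phi>\<^sub>3\<close>, and rounding the four coordinates of \<open>\<gamma> / \<beta>\<close> leaves a remainder of norm
  \<open>< N(\<beta>)\<close>, so every ideal is principal. Since \<open>\<phi>\<^sub>7 = cnj\<close> and \<open>\<phi>\<^sub>5 = cnj \<circ> \<sigma>\<close>,
  the squared canonical norm is \<open>2(|x|\<^sup>2 + |\<sigma> x|\<^sup>2)\<close>. Choose a generator \<open>\<alpha>\<close> minimising
  it and put \<open>p = |\<alpha>|\<^sup>2\<close>, \<open>q = |\<sigma> \<alpha>|\<^sup>2\<close>. Comparing \<open>\<alpha>\<close> with its associates
  \<open>(\<surd>2 \<plusminus> 1) \<alpha>\<close> gives \<open>(p + q)\<^sup>2 \<le> 8pq\<close>. Any other nonzero element of the ideal is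
  \<open>r \<alpha>\<close> with \<open>r\<close> a unit, hence a generator, or with \<open>N(r) = |r|\<^sup>2 |\<sigma> r|\<^sup>2 \<ge> 2\<close>, and then
  by AM-GM \<open>p |r|\<^sup>2 + q |\<sigma> r|\<^sup>2 \<ge> 2 \<surd>(2pq) \<ge> p + q\<close>.
\<close>

definition z8_elem :: "int \<Rightarrow> int \<Rightarrow> int \<Rightarrow> int \<Rightarrow> complex" where
  "z8_elem a b c d = of_int a + of_int b * zeta8 + of_int c * zeta8 ^ 2 + of_int d * zeta8 ^ 3"

lemma zeta8_eq: "zeta8 = Complex (sqrt 2 / 2) (sqrt 2 / 2)"
  unfolding zeta8_def cis.ctr by (simp add: cos_45 sin_45)

lemma zeta8_squared: "zeta8 ^ 2 = \<i>"
  unfolding zeta8_eq power2_eq_square complex_eq_iff by simp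

lemma zeta8_pow4: "zeta8 ^ 4 = -1"
  using power_mult[of zeta8 2 2] by (simp add: zeta8_squared)

lemma z8_elem_Complex:
  "z8_elem a b c d = Complex (a + (b - d) * sqrt 2 / 2) (c + (b + d) * sqrt 2 / 2)"
proof -
  have "zeta8 ^ 3 = \<i> * zeta8"
    by (simp add: power3_eq_cube power2_eq_square flip: zeta8_squared)
  then show ?thesis
    unfolding z8_elem_def zeta8_squared by (simp add: zeta8_eq complex_eq_iff field_simps)
qed

lemma nat_square_eq_double_square: "(b::nat)\<^sup>2 = 2 * a\<^sup>2 \<Longrightarrow> b = 0"
proof (induction b arbitrary: a rule: less_induct)
  case (less b)
  then obtain b' where b': "b = 2 * b'"
    by (metis dvd_triv_left even_mult_iff evenE pos2 power2_eq_square)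
  then have "a\<^sup>2 = 2 * b'\<^sup>2"
    using less.prems by (simp add: power2_eq_square)
  then obtain a' where "a = 2 * a'"
    by (metis dvd_triv_left even_mult_iff evenE pos2 power2_eq_square)
  then have "b'\<^sup>2 = 2 * a'\<^sup>2"
    using \<open>a\<^sup>2 = 2 * b'\<^sup>2\<close> by (simp add: power2_eq_square)
  then show ?case
    using less.IH[of b' a'] b' by fastforce
qed

lemma int_linear_sqrt2_eq_0:
  assumes "real_of_int a + real_of_int b * sqrt 2 = 0"
  shows "a = 0 \<and> b = 0"
proof -
  have "real_of_int b * sqrt 2 = - a"
    using assms by linarith
  then have "(real_of_int b * sqrt 2)\<^sup>2 = (- a)\<^sup>2"
    by simp
  then have "real_of_int (a\<^sup>2) = real_of_int (2 * b\<^sup>2)"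
    by (simp add: power_mult_distrib)
  then have "int ((nat \<bar>a\<bar>)\<^sup>2) = int (2 * (nat \<bar>b\<bar>)\<^sup>2)"
    by (simp only: of_int_eq_iff) simp
  then have "(nat \<bar>a\<bar>)\<^sup>2 = 2 * (nat \<bar>b\<bar>)\<^sup>2"
    by (simp only: of_nat_eq_iff)
  then have "a = 0"
    using nat_square_eq_double_square by fastforce
  then show ?thesis
    using assms by simp
qed

lemma z8_elem_eq_iff [simp]:
  "z8_elem a b c d = z8_elem a' b' c' d' \<longleftrightarrow> a = a' \<and> b = b' \<and> c = c' \<and> d = d'"
proof
  assume eq: "z8_elem a b c d = z8_elem a' b' c' d'"
  have "2 * (a - a') = 0 \<and> (b - d) - (b' - d') = 0"
    by (rule int_linear_sqrt2_eq_0)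
      (use eq in \<open>simp add: z8_elem_Complex complex_eq_iff field_simps\<close>)
  moreover have "2 * (c - c') = 0 \<and> (b + d) - (b' + d') = 0"
    by (rule int_linear_sqrt2_eq_0)
      (use eq in \<open>simp add: z8_elem_Complex complex_eq_iff field_simps\<close>)
  ultimately show "a = a' \<and> b = b' \<and> c = c' \<and> d = d'"
    by auto
qed simp

lemma z8_elem_diff: "z8_elem a b c d - z8_elem a' b' c' d' = z8_elem (a - a') (b - b') (c - c') (d - d')"
  unfolding z8_elem_def by (simp add: algebra_simps)

lemma z8_elem_mult:
  "z8_elem a b c d * z8_elem a' b' c' d' =
     z8_elem (a*a' - b*d' - c*c' - d*b') (a*b' + b*a' - c*d' - d*c')
             (a*c' + b*b' + c*a' - d*d') (a*d' + b*c' + c*b' + d*a')"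
  unfolding z8_elem_def of_int_add of_int_diff of_int_mult using zeta8_pow4 by algebra

lemma of_int_eq_z8_elem: "of_int n = z8_elem n 0 0 0"
  unfolding z8_elem_def by simp

lemma z8_elem_eq_0_iff [simp]: "z8_elem a b c d = 0 \<longleftrightarrow> a = 0 \<and> b = 0 \<and> c = 0 \<and> d = 0"
  using z8_elem_eq_iff[of a b c d 0 0 0 0] by (simp add: z8_elem_def)

lemma Z8_iff: "x \<in> Z8 \<longleftrightarrow> (\<exists>a b c d. x = z8_elem a b c d)"
  unfolding Z8_def z8_elem_def by auto

lemma z8_elem_in_Z8 [simp]: "z8_elem a b c d \<in> Z8"
  unfolding Z8_iff by blast

lemma Z8_cases [cases set: Z8]:
  assumes "x \<in> Z8"
  obtains a b c d where "x = z8_elem a b c d"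
  using assms unfolding Z8_iff by blast

lemma Z8_diff: "x \<in> Z8 \<Longrightarrow> y \<in> Z8 \<Longrightarrow> x - y \<in> Z8"
  by (auto elim!: Z8_cases simp: z8_elem_diff)

lemma Z8_mult: "x \<in> Z8 \<Longrightarrow> y \<in> Z8 \<Longrightarrow> x * y \<in> Z8"
  by (auto elim!: Z8_cases simp: z8_elem_mult)

lemma cnj_z8_elem: "cnj (z8_elem a b c d) = z8_elem a (- d) (- c) (- b)"
  by (simp add: z8_elem_Complex complex_eq_iff algebra_simps)

lemma Z8_cnj: "x \<in> Z8 \<Longrightarrow> cnj x \<in> Z8"
  by (auto elim!: Z8_cases simp: cnj_z8_elem)

lemma emb_z8_elem:
  "emb k (z8_elem a b c d) =
     of_int a + of_int b * zeta8 ^ k + of_int c * zeta8 ^ (2 * k) + of_int d * zeta8 ^ (3 * k)"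
  unfolding emb_def by (rule the_equality) (auto simp flip: z8_elem_def)

lemma emb_1: "x \<in> Z8 \<Longrightarrow> emb 1 x = x"
  by (auto elim!: Z8_cases simp: emb_z8_elem) (simp add: z8_elem_def)

lemma emb_3_z8_elem: "emb 3 (z8_elem a b c d) = z8_elem a d (- c) b"
  unfolding emb_z8_elem unfolding z8_elem_def using zeta8_pow4 by simp algebra

lemma emb_5: "x \<in> Z8 \<Longrightarrow> emb 5 x = cnj (emb 3 x)"
proof (elim Z8_cases)
  fix a b c d assume x: "x = z8_elem a b c d"
  have "emb 5 x = z8_elem a (- b) c (- d)"
    unfolding x emb_z8_elem unfolding z8_elem_def using zeta8_pow4 by simp algebra
  then show "emb 5 x = cnj (emb 3 x)"
    by (simp add: x emb_3_z8_elem cnj_z8_elem)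
qed

lemma emb_7: "x \<in> Z8 \<Longrightarrow> emb 7 x = cnj x"
proof (elim Z8_cases)
  fix a b c d assume x: "x = z8_elem a b c d"
  have "emb 7 x = z8_elem a (- d) (- c) (- b)"
    unfolding x emb_z8_elem unfolding z8_elem_def using zeta8_pow4 by simp algebra
  then show "emb 7 x = cnj x"
    by (simp add: x cnj_z8_elem)
qed

lemma emb_3_Z8: "x \<in> Z8 \<Longrightarrow> emb 3 x \<in> Z8"
  by (auto elim!: Z8_cases simp: emb_3_z8_elem)

lemma emb_3_mult: "x \<in> Z8 \<Longrightarrow> y \<in> Z8 \<Longrightarrow> emb 3 (x * y) = emb 3 x * emb 3 y"
  by (auto elim!: Z8_cases simp: z8_elem_mult emb_3_z8_elem algebra_simps)

lemma emb_3_eq_0_iff: "x \<in> Z8 \<Longrightarrow> emb 3 x = 0 \<longleftrightarrow> x = 0"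
  by (auto elim!: Z8_cases simp: emb_3_z8_elem)

lemma cmod_sq_z8_elem:
  "(cmod (z8_elem a b c d))\<^sup>2 =
     of_int (a\<^sup>2 + b\<^sup>2 + c\<^sup>2 + d\<^sup>2) + sqrt 2 * of_int (a*b - a*d + b*c + c*d)"
  unfolding z8_elem_Complex cmod_power2 by (simp add: power2_eq_square algebra_simps) (simp add: field_simps)

lemma cmod_sq_emb_3_z8_elem:
  "(cmod (emb 3 (z8_elem a b c d)))\<^sup>2 =
     of_int (a\<^sup>2 + b\<^sup>2 + c\<^sup>2 + d\<^sup>2) - sqrt 2 * of_int (a*b - a*d + b*c + c*d)"
  unfolding emb_3_z8_elem cmod_sq_z8_elem by (simp add: algebra_simps)

definition norm8 :: "complex \<Rightarrow> real" where
  "norm8 x = (cmod x)\<^sup>2 * (cmod (emb 3 x))\<^sup>2"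

definition half_canon_sq :: "complex \<Rightarrow> real" where
  "half_canon_sq x = (cmod x)\<^sup>2 + (cmod (emb 3 x))\<^sup>2"

lemma canon_norm_eq: "x \<in> Z8 \<Longrightarrow> canon_norm x = sqrt (2 * half_canon_sq x)"
  using emb_1[of x] by (simp add: canon_norm_def half_canon_sq_def emb_5 emb_7)

lemma norm8_z8_elem:
  "norm8 (z8_elem a b c d) =
     of_int ((a\<^sup>2 + b\<^sup>2 + c\<^sup>2 + d\<^sup>2)\<^sup>2 - 2 * (a*b - a*d + b*c + c*d)\<^sup>2)"
  unfolding norm8_def cmod_sq_z8_elem cmod_sq_emb_3_z8_elem
  by (simp add: algebra_simps power2_eq_square)

lemma half_canon_sq_z8_elem:
  "half_canon_sq (z8_elem a b c d) = of_int (2 * (a\<^sup>2 + b\<^sup>2 + c\<^sup>2 + d\<^sup>2))"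
  unfolding half_canon_sq_def cmod_sq_z8_elem cmod_sq_emb_3_z8_elem by simp

lemma norm8_Ints: "x \<in> Z8 \<Longrightarrow> norm8 x \<in> \<int>"
  by (auto elim!: Z8_cases simp: norm8_z8_elem)

lemma half_canon_sq_Ints: "x \<in> Z8 \<Longrightarrow> half_canon_sq x \<in> \<int>"
  by (auto elim!: Z8_cases simp: half_canon_sq_z8_elem)

lemma norm8_mult: "x \<in> Z8 \<Longrightarrow> y \<in> Z8 \<Longrightarrow> norm8 (x * y) = norm8 x * norm8 y"
  by (simp add: norm8_def emb_3_mult norm_mult power_mult_distrib)

lemma half_canon_sq_mult:
  "x \<in> Z8 \<Longrightarrow> y \<in> Z8 \<Longrightarrow>
     half_canon_sq (x * y) = (cmod x)\<^sup>2 * (cmod y)\<^sup>2 + (cmod (emb 3 x))\<^sup>2 * (cmod (emb 3 y))\<^sup>2"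
  by (simp add: half_canon_sq_def emb_3_mult norm_mult power_mult_distrib)

lemma norm8_ge_1: "x \<in> Z8 \<Longrightarrow> x \<noteq> 0 \<Longrightarrow> norm8 x \<ge> 1"
proof -
  assume "x \<in> Z8" "x \<noteq> 0"
  then have "norm8 x > 0"
    by (simp add: norm8_def emb_3_eq_0_iff)
  with norm8_Ints[OF \<open>x \<in> Z8\<close>] show "norm8 x \<ge> 1"
    by (auto elim!: Ints_cases)
qed

lemma norm8_of_int: "norm8 (of_int n) = of_int n ^ 4"
  by (simp add: of_int_eq_z8_elem norm8_z8_elem flip: power_mult)

definition norm8_cofactor :: "complex \<Rightarrow> complex" where
  "norm8_cofactor x = cnj x * emb 3 x * cnj (emb 3 x)"

lemma norm8_cofactor_Z8: "x \<in> Z8 \<Longrightarrow> norm8_cofactor x \<in> Z8"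
  unfolding norm8_cofactor_def by (intro Z8_mult Z8_cnj emb_3_Z8)

lemma mult_norm8_cofactor: "x * norm8_cofactor x = of_real (norm8 x)"
proof -
  have "x * norm8_cofactor x = (x * cnj x) * (emb 3 x * cnj (emb 3 x))"
    unfolding norm8_cofactor_def by (simp add: algebra_simps)
  also have "\<dots> = of_real (norm8 x)"
    unfolding norm8_def of_real_mult complex_norm_square ..
  finally show ?thesis .
qed

lemma norm8_norm8_cofactor:
  assumes "x \<in> Z8" "x \<noteq> 0"
  shows "norm8 (norm8_cofactor x) = norm8 x ^ 3"
proof -
  obtain n where n: "norm8 x = of_int n"
    using norm8_Ints[OF assms(1)] by (auto elim: Ints_cases)
  have "norm8 x * norm8 (norm8_cofactor x) = norm8 (x * norm8_cofactor x)"
    using norm8_mult[OF assms(1) norm8_cofactor_Z8[OF assms(1)]] by simp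
  also have "\<dots> = norm8 x * norm8 x ^ 3"
    by (simp add: mult_norm8_cofactor n norm8_of_int eval_nat_numeral)
  finally have "norm8 x * norm8 (norm8_cofactor x) = norm8 x * norm8 x ^ 3" .
  moreover have "norm8 x \<noteq> 0"
    using norm8_ge_1[OF assms] by simp
  ultimately show ?thesis
    by (metis mult_left_cancel)
qed

lemma round_to_multiple:
  fixes w n :: int
  assumes "n > 0"
  shows "\<exists>q. \<bar>2 * (w - n * q)\<bar> \<le> n"
proof -
  define q where "q = (2 * w + n) div (2 * n)"
  have "2 * w + n = 2 * n * q + (2 * w + n) mod (2 * n)"
    unfolding q_def by simp
  moreover have "0 \<le> (2 * w + n) mod (2 * n)" "(2 * w + n) mod (2 * n) < 2 * n"
    using assms by simp_all
  ultimately have "\<bar>2 * (w - n * q)\<bar> \<le> n"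
    by (simp add: algebra_simps abs_le_iff)
  then show ?thesis ..
qed

lemma norm_form_lt:
  fixes a b c d n :: int
  assumes "n > 0" "\<bar>2*a\<bar> \<le> n" "\<bar>2*b\<bar> \<le> n" "\<bar>2*c\<bar> \<le> n" "\<bar>2*d\<bar> \<le> n"
  shows "(a\<^sup>2 + b\<^sup>2 + c\<^sup>2 + d\<^sup>2)\<^sup>2 - 2 * (a*b - a*d + b*c + c*d)\<^sup>2 < n ^ 4"
proof -
  define S where "S = a\<^sup>2 + b\<^sup>2 + c\<^sup>2 + d\<^sup>2"
  define T where "T = a*b - a*d + b*c + c*d"
  have "4 * x\<^sup>2 \<le> n\<^sup>2" if "\<bar>2*x\<bar> \<le> n" for x
    using that abs_le_square_iff[of "2*x" n] \<open>n > 0\<close> by (simp add: power_mult_distrib)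
  then have sq: "4*a\<^sup>2 \<le> n\<^sup>2" "4*b\<^sup>2 \<le> n\<^sup>2" "4*c\<^sup>2 \<le> n\<^sup>2" "4*d\<^sup>2 \<le> n\<^sup>2"
    using assms by simp_all
  then have "S \<le> n\<^sup>2"
    unfolding S_def by linarith
  consider "S < n\<^sup>2" | "S = n\<^sup>2"
    using \<open>S \<le> n\<^sup>2\<close> by linarith
  then show ?thesis
  proof cases
    case 1
    then have "S\<^sup>2 < (n\<^sup>2)\<^sup>2"
      by (intro power_strict_mono) (auto simp: S_def)
    then have "S\<^sup>2 < n ^ 4"
      by (simp flip: power_mult)
    then show ?thesis
      unfolding S_def[symmetric] T_def[symmetric] using zero_le_power2[of T] by linarith
  next
    case 2
    \<comment> \<open>all four coordinates then have absolute value \<open>n / 2\<close>, so \<open>T\<close> cannot vanish\<close>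
    then have "4*a\<^sup>2 = n\<^sup>2" "4*b\<^sup>2 = n\<^sup>2" "4*c\<^sup>2 = n\<^sup>2" "4*d\<^sup>2 = n\<^sup>2"
      using sq unfolding S_def by linarith+
    then have "a\<^sup>2 = b\<^sup>2" "c\<^sup>2 = b\<^sup>2" "d\<^sup>2 = b\<^sup>2" "b \<noteq> 0"
      using \<open>n > 0\<close> by auto
    then have "a \<noteq> 0" "c \<noteq> 0" "d = b \<or> d = - b"
      by (auto simp: power2_eq_iff)
    then have "T \<noteq> 0"
      using \<open>b \<noteq> 0\<close> unfolding T_def by (auto simp: algebra_simps)
    then show ?thesis
      using 2 unfolding S_def[symmetric] T_def[symmetric] by (simp flip: power_mult)
  qed
qed

lemma Z8_approx_by_multiple:
  assumes "w \<in> Z8" "n > 0"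
  shows "\<exists>q\<in>Z8. norm8 (w - of_int n * q) < of_int n ^ 4"
proof -
  obtain w0 w1 w2 w3 where w: "w = z8_elem w0 w1 w2 w3"
    using assms(1) by (rule Z8_cases)
  obtain q0 q1 q2 q3 where
    "\<bar>2 * (w0 - n * q0)\<bar> \<le> n" "\<bar>2 * (w1 - n * q1)\<bar> \<le> n"
    "\<bar>2 * (w2 - n * q2)\<bar> \<le> n" "\<bar>2 * (w3 - n * q3)\<bar> \<le> n"
    using round_to_multiple[OF assms(2)] by metis
  from norm_form_lt[OF assms(2) this]
  have "norm8 (w - of_int n * z8_elem q0 q1 q2 q3) < of_int n ^ 4"
    unfolding w of_int_eq_z8_elem z8_elem_mult z8_elem_diff norm8_z8_elem
    by (simp flip: of_int_power)
  then show ?thesis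
    using z8_elem_in_Z8 by blast
qed

lemma Z8_norm_euclidean:
  assumes "\<beta> \<in> Z8" "\<beta> \<noteq> 0" "\<gamma> \<in> Z8"
  shows "\<exists>q\<in>Z8. norm8 (\<gamma> - q * \<beta>) < norm8 \<beta>"
proof -
  obtain n where n: "norm8 \<beta> = of_int n"
    using norm8_Ints[OF assms(1)] by (auto elim: Ints_cases)
  then have "n > 0"
    using norm8_ge_1[OF assms(1,2)] by simp
  obtain q where q: "q \<in> Z8" "norm8 (\<gamma> * norm8_cofactor \<beta> - of_int n * q) < of_int n ^ 4"
    using Z8_approx_by_multiple[OF Z8_mult[OF assms(3) norm8_cofactor_Z8[OF assms(1)]] \<open>n > 0\<close>]
    by blast
  have "\<gamma> * norm8_cofactor \<beta> - of_int n * q = (\<gamma> - q * \<beta>) * norm8_cofactor \<beta>"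
    using mult_norm8_cofactor[of \<beta>] n by (simp add: algebra_simps)
  with q have "norm8 (\<gamma> - q * \<beta>) * of_int n ^ 3 < of_int n * of_int n ^ 3"
    using assms n by (simp add: norm8_mult Z8_diff Z8_mult norm8_cofactor_Z8 norm8_norm8_cofactor
        eval_nat_numeral)
  then show ?thesis
    using \<open>n > 0\<close> q(1) n by (auto simp: mult_less_cancel_right)
qed

lemma ex_min_nonneg_Ints:
  fixes f :: "'a \<Rightarrow> real"
  assumes "x \<in> S" and "\<And>y. y \<in> S \<Longrightarrow> f y \<in> \<int>" and "\<And>y. y \<in> S \<Longrightarrow> f y \<ge> 0"
  shows "\<exists>m\<in>S. \<forall>y\<in>S. f m \<le> f y"
proof -
  have f_eq: "real (nat \<lfloor>f y\<rfloor>) = f y" if "y \<in> S" for y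
    using assms(2,3)[OF that] by (auto elim!: Ints_cases)
  obtain m where "m \<in> S" "\<forall>y. y \<in> S \<longrightarrow> nat \<lfloor>f m\<rfloor> \<le> nat \<lfloor>f y\<rfloor>"
    using ex_has_least_nat[of "\<lambda>y. y \<in> S" x "\<lambda>y. nat \<lfloor>f y\<rfloor>"] assms(1) by blast
  then show ?thesis
    using f_eq by (metis of_nat_le_iff)
qed

lemma is_ideal_Z8_diff:
  assumes "is_ideal_Z8 I" "x \<in> I" "y \<in> I"
  shows "x - y \<in> I"
proof -
  have "- 1 \<in> Z8"
    using z8_elem_in_Z8[of "- 1" 0 0 0] by (simp flip: of_int_eq_z8_elem)
  then show ?thesis
    using assms unfolding is_ideal_Z8_def by (metis diff_conv_add_uminus mult_minus1)
qed

lemma Z8_ideal_principal: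
  assumes I: "is_ideal_Z8 I"
  shows "\<exists>\<beta>\<in>I. I = principal_Z8 \<beta>"
proof (cases "I = {0}")
  case True
  have "0 \<in> Z8"
    using z8_elem_in_Z8[of 0 0 0 0] unfolding z8_elem_def by simp
  with True show ?thesis
    by (auto simp: principal_Z8_def)
next
  case False
  have sub: "I \<subseteq> Z8" and "0 \<in> I" and mult: "\<And>r x. r \<in> Z8 \<Longrightarrow> x \<in> I \<Longrightarrow> r * x \<in> I"
    using I unfolding is_ideal_Z8_def by auto
  obtain x where "x \<in> I - {0}"
    using False \<open>0 \<in> I\<close> by blast
  then obtain \<beta> where \<beta>: "\<beta> \<in> I - {0}" and minimal: "\<And>y. y \<in> I - {0} \<Longrightarrow> norm8 \<beta> \<le> norm8 y"
    using ex_min_nonneg_Ints[of x "I - {0}" norm8] sub norm8_Ints by (force simp: norm8_def)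
  have "\<gamma> \<in> principal_Z8 \<beta>" if \<gamma>: "\<gamma> \<in> I" for \<gamma>
  proof -
    obtain q where q: "q \<in> Z8" "norm8 (\<gamma> - q * \<beta>) < norm8 \<beta>"
      using Z8_norm_euclidean[of \<beta> \<gamma>] \<beta> \<gamma> sub by auto
    have "q * \<beta> \<in> I"
      using mult q(1) \<beta> by simp
    then have "\<gamma> - q * \<beta> \<in> I"
      by (rule is_ideal_Z8_diff[OF I \<gamma>])
    then have "\<gamma> = q * \<beta>"
      using minimal[of "\<gamma> - q * \<beta>"] q(2) by fastforce
    then show ?thesis
      using q(1) unfolding principal_Z8_def by blast
  qed
  moreover have "principal_Z8 \<beta> \<subseteq> I"
    using mult \<beta> unfolding principal_Z8_def by blast
  ultimately show ?thesis
    using \<beta> by blast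
qed

lemma principal_Z8_mult_unit:
  assumes "u \<in> Z8" "w \<in> Z8" "w * u = 1"
  shows "principal_Z8 (u * x) = principal_Z8 x"
proof
  show "principal_Z8 (u * x) \<subseteq> principal_Z8 x"
    using assms(1) Z8_mult unfolding principal_Z8_def by (auto simp flip: mult.assoc)
  have "r * x = (r * w) * (u * x)" for r
    using assms(3) by (simp add: algebra_simps)
  then show "principal_Z8 x \<subseteq> principal_Z8 (u * x)"
    using assms(2) Z8_mult unfolding principal_Z8_def by blast
qed

text \<open>As \<open>\<zeta>\<^sub>8 - \<zeta>\<^sub>8\<^sup>3 = \<surd>2\<close>, these are \<open>\<surd>2 + 1\<close> and its inverse \<open>\<surd>2 - 1\<close>.\<close>
definition sqrt2_plus_1 :: complex where
  "sqrt2_plus_1 = z8_elem 1 1 0 (- 1)"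

definition sqrt2_minus_1 :: complex where
  "sqrt2_minus_1 = z8_elem (- 1) 1 0 (- 1)"

lemma sqrt2_plus_minus_1_Z8: "sqrt2_plus_1 \<in> Z8" "sqrt2_minus_1 \<in> Z8"
  unfolding sqrt2_plus_1_def sqrt2_minus_1_def by simp_all

lemma cmod_sq_sqrt2_plus_1:
  "(cmod sqrt2_plus_1)\<^sup>2 = 3 + 2 * sqrt 2" "(cmod (emb 3 sqrt2_plus_1))\<^sup>2 = 3 - 2 * sqrt 2"
  unfolding sqrt2_plus_1_def cmod_sq_z8_elem cmod_sq_emb_3_z8_elem by simp_all

lemma cmod_sq_sqrt2_minus_1:
  "(cmod sqrt2_minus_1)\<^sup>2 = 3 - 2 * sqrt 2" "(cmod (emb 3 sqrt2_minus_1))\<^sup>2 = 3 + 2 * sqrt 2"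
  unfolding sqrt2_minus_1_def cmod_sq_z8_elem cmod_sq_emb_3_z8_elem by simp_all

lemma norm8_sqrt2_plus_minus_1: "norm8 sqrt2_plus_1 = 1" "norm8 sqrt2_minus_1 = 1"
  unfolding sqrt2_plus_1_def sqrt2_minus_1_def norm8_z8_elem by simp_all

lemma sq_sum_le_8_mult:
  fixes p q :: real
  assumes "p + q \<le> p * (3 + 2 * sqrt 2) + q * (3 - 2 * sqrt 2)"
    and "p + q \<le> p * (3 - 2 * sqrt 2) + q * (3 + 2 * sqrt 2)"
  shows "(p + q)\<^sup>2 \<le> 8 * p * q"
proof -
  define r where "r = sqrt (2::real)"
  have "q * (r - 1) - p * (r + 1) \<le> 0" "p * (r - 1) - q * (r + 1) \<le> 0"
    using assms unfolding r_def[symmetric] by (simp_all add: algebra_simps)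
  then have "0 \<le> (q * (r - 1) - p * (r + 1)) * (p * (r - 1) - q * (r + 1))"
    by (rule mult_nonpos_nonpos)
  also have "\<dots> = 8 * p * q - (p + q)\<^sup>2"
    by (simp add: r_def algebra_simps power2_eq_square)
  finally show ?thesis
    by simp
qed

lemma sum_le_weighted_sum:
  fixes p q X Y :: real
  assumes "p \<ge> 0" "q \<ge> 0" "X \<ge> 0" "Y \<ge> 0" "X * Y \<ge> 2" "(p + q)\<^sup>2 \<le> 8 * p * q"
  shows "p + q \<le> p * X + q * Y"
proof (rule power2_le_imp_le)
  have "8 * p * q \<le> 4 * (p * X) * (q * Y)"
    using assms mult_left_mono[OF assms(5), of "4 * p * q"] by (simp add: algebra_simps)
  also have "\<dots> \<le> (p * X + q * Y)\<^sup>2"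
    using sum_squares_ge_zero[of "p * X - q * Y" 0] by (simp add: power2_eq_square algebra_simps)
  finally show "(p + q)\<^sup>2 \<le> (p * X + q * Y)\<^sup>2"
    using assms(6) by linarith
  show "0 \<le> p * X + q * Y"
    using assms by simp
qed

lemma half_canon_sq_le_multiple:
  assumes "\<alpha> \<in> Z8"
    and minimal: "\<And>u. u \<in> Z8 \<Longrightarrow> norm8 u = 1 \<Longrightarrow> half_canon_sq \<alpha> \<le> half_canon_sq (u * \<alpha>)"
    and "r \<in> Z8" "r \<noteq> 0"
  shows "half_canon_sq \<alpha> \<le> half_canon_sq (r * \<alpha>)"
proof (cases "norm8 r = 1")
  case True
  then show ?thesis
    using minimal \<open>r \<in> Z8\<close> by blast
next
  case False
  define p where "p = (cmod \<alpha>)\<^sup>2"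
  define q where "q = (cmod (emb 3 \<alpha>))\<^sup>2"
  have multiple_eq: "half_canon_sq (u * \<alpha>) = p * (cmod u)\<^sup>2 + q * (cmod (emb 3 u))\<^sup>2"
    if "u \<in> Z8" for u
    using half_canon_sq_mult[OF that \<open>\<alpha> \<in> Z8\<close>] by (simp add: p_def q_def mult.commute)
  have "p + q = half_canon_sq \<alpha>"
    by (simp add: p_def q_def half_canon_sq_def)
  have "(p + q)\<^sup>2 \<le> 8 * p * q"
  proof (rule sq_sum_le_8_mult)
    show "p + q \<le> p * (3 + 2 * sqrt 2) + q * (3 - 2 * sqrt 2)"
      using minimal[of sqrt2_plus_1] multiple_eq[of sqrt2_plus_1] \<open>p + q = half_canon_sq \<alpha>\<close>
      by (simp add: sqrt2_plus_minus_1_Z8 norm8_sqrt2_plus_minus_1 cmod_sq_sqrt2_plus_1)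
    show "p + q \<le> p * (3 - 2 * sqrt 2) + q * (3 + 2 * sqrt 2)"
      using minimal[of sqrt2_minus_1] multiple_eq[of sqrt2_minus_1] \<open>p + q = half_canon_sq \<alpha>\<close>
      by (simp add: sqrt2_plus_minus_1_Z8 norm8_sqrt2_plus_minus_1 cmod_sq_sqrt2_minus_1)
  qed
  moreover have "norm8 r \<ge> 2"
    using norm8_ge_1[OF \<open>r \<in> Z8\<close> \<open>r \<noteq> 0\<close>] norm8_Ints[OF \<open>r \<in> Z8\<close>] False
    by (auto elim!: Ints_cases)
  ultimately have "p + q \<le> p * (cmod r)\<^sup>2 + q * (cmod (emb 3 r))\<^sup>2"
    by (intro sum_le_weighted_sum) (auto simp: p_def q_def norm8_def)
  then show ?thesis
    using multiple_eq[OF \<open>r \<in> Z8\<close>] \<open>p + q = half_canon_sq \<alpha>\<close> by simp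
qed

theorem theorem5:
  assumes "is_ideal_Z8 I" and "I \<noteq> {0}"
  shows "\<exists>\<alpha>'\<in>I. I = principal_Z8 \<alpha>' \<and>
           (\<forall>\<gamma>\<in>I. \<gamma> \<noteq> 0 \<longrightarrow> canon_norm \<alpha>' \<le> canon_norm \<gamma>)"
proof -
  have sub: "I \<subseteq> Z8" and mult: "\<And>r x. r \<in> Z8 \<Longrightarrow> x \<in> I \<Longrightarrow> r * x \<in> I"
    using assms(1) unfolding is_ideal_Z8_def by auto
  define G where "G = {x \<in> I. I = principal_Z8 x}"
  obtain \<beta> where "\<beta> \<in> G"
    using Z8_ideal_principal[OF assms(1)] unfolding G_def by blast
  then obtain \<alpha> where "\<alpha> \<in> G" and minimal: "\<And>y. y \<in> G \<Longrightarrow> half_canon_sq \<alpha> \<le> half_canon_sq y"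
    using ex_min_nonneg_Ints[of \<beta> G half_canon_sq] half_canon_sq_Ints sub
    by (force simp: G_def half_canon_sq_def)
  then have "\<alpha> \<in> I" "I = principal_Z8 \<alpha>" "\<alpha> \<in> Z8"
    using sub unfolding G_def by auto
  have "half_canon_sq \<alpha> \<le> half_canon_sq (u * \<alpha>)" if "u \<in> Z8" "norm8 u = 1" for u
  proof (rule minimal)
    have "norm8_cofactor u * u = 1"
      using mult_norm8_cofactor[of u] that(2) by (simp add: mult.commute)
    then show "u * \<alpha> \<in> G"
      using principal_Z8_mult_unit[OF that(1) norm8_cofactor_Z8[OF that(1)]] mult[OF that(1) \<open>\<alpha> \<in> I\<close>]
        \<open>I = principal_Z8 \<alpha>\<close> unfolding G_def by simp
  qed
  then have "canon_norm \<alpha> \<le> canon_norm (r * \<alpha>)" if "r \<in> Z8" "r \<noteq> 0" for r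
    using half_canon_sq_le_multiple[OF \<open>\<alpha> \<in> Z8\<close> _ that] that \<open>\<alpha> \<in> Z8\<close>
    by (simp add: canon_norm_eq Z8_mult)
  then have "\<forall>\<gamma>\<in>I. \<gamma> \<noteq> 0 \<longrightarrow> canon_norm \<alpha> \<le> canon_norm \<gamma>"
    using \<open>I = principal_Z8 \<alpha>\<close> unfolding principal_Z8_def by auto
  then show ?thesis
    using \<open>\<alpha> \<in> I\<close> \<open>I = principal_Z8 \<alpha>\<close> by blast
qed

end
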